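(* Consider scheduling a single task on $n=2$ machines without payments, in the model where machines are bound by their declarations (described in the context). Fix constants $L>2$ and $c>1$, and let $\mathcal A^{(2)}_{L,c}$ be the following randomized allocation rule. Given declarations, call the machine with the smaller declaration machine $1$ and the other machine $2$, so that $\hat t_1\le \hat t_2$. Then machine $1$ receives the task with probability $a_1$ and machine $2$ with probability $a_2=1-a_1$, where: (i) if $\hat t_1=\hat t_2$: $a_1=a_2=\tfrac12$; (ii) if $\hat t_1<\hat t_2<c\,\hat t_1$: $a_1=\tfrac1L$, $a_2=1-\tfrac1L$; (iii) if $c\,\hat t_1\le \hat t_2$: $a_1=1-\tfrac{1}{L}\tfrac{\hat t_1}{\hat t_2}$, $a_2=\tfrac1L\tfrac{\hat t_1}{\hat t_2}$. Then the pure Price of Anarchy of $\mathcal A^{(2)}_{L,c}$ is at most $1+\frac1L$.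
   Context: Model: there are $n$ machines and one task. Machine $i$ has a private true execution time $t_i\ge 0$ for the task and reports a declaration $\hat t_i\ge 0$. A (randomized) allocation rule maps the declaration vector $\hat{\mathbf t}$ to probabilities $a_i(\hat{\mathbf t})$ with $\sum_i a_i=1$; no payments are used. Machines are bound by their declarations: if machine $i$ gets the task she executes it for time $\max\{\hat t_i,t_i\}$. Hence the (expected) cost of machine $i$ is $C_i(\hat{\mathbf t})=a_i(\hat{\mathbf t})\max\{\hat t_i,t_i\}$, and the makespan (which for one task equals the expected execution time of the task) is $\mathcal M(\hat{\mathbf t})=\sum_i a_i(\hat{\mathbf t})\max\{\hat t_i,t_i\}$. A pure Nash equilibrium is a deterministic declaration vector $\hat{\mathbf t}$ such that for every machine $i$ and every alternative declaration $x\ge 0$, $C_i(\hat{\mathbf t})\le C_i(x,\hat{\mathbf t}_{-i})$. The pure Price of Anarchy of a rule is the supremum, over all true instances $\mathbf t$, of the ratio of the makespan of the worst pure Nash equilibrium to the optimal makespan $\min_i t_i$ (the best centralized allocation with respect to the true times). *)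

theory Defs
  imports Main "HOL.Real"
begin

text \<open>Two machines, indexed by bool-free pairs: declarations d1 d2, true times t1 t2.
  alloc L c x y = probability that the machine declaring x gets the task when the
  other machine declares y, under the rule A^(2)_{L,c}.\<close>

definition alloc :: "real \<Rightarrow> real \<Rightarrow> real \<Rightarrow> real \<Rightarrow> real" where
  "alloc L c x y =
     (if x = y then 1/2
      else if x < y then
        (if y < c * x then 1 / L else 1 - (1 / L) * (x / y))
      else
        (if x < c * y then 1 - 1 / L else (1 / L) * (y / x)))"

definition cost :: "real \<Rightarrow> real \<Rightarrow> real \<Rightarrow> real \<Rightarrow> real \<Rightarrow> real" where
  "cost L c t x y = alloc L c x y * max x t"

definition makespan :: "real \<Rightarrow> real \<Rightarrow> real \<Rightarrow> real \<Rightarrow> real \<Rightarrow> real \<Rightarrow> real" where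
  "makespan L c t1 t2 d1 d2 = alloc L c d1 d2 * max d1 t1 + alloc L c d2 d1 * max d2 t2"

definition pure_NE :: "real \<Rightarrow> real \<Rightarrow> real \<Rightarrow> real \<Rightarrow> real \<Rightarrow> real \<Rightarrow> bool" where
  "pure_NE L c t1 t2 d1 d2 \<longleftrightarrow> d1 \<ge> 0 \<and> d2 \<ge> 0 \<and>
     (\<forall>x\<ge>0. cost L c t1 d1 d2 \<le> cost L c t1 x d2) \<and>
     (\<forall>x\<ge>0. cost L c t2 d2 d1 \<le> cost L c t2 x d1)"

end

theory Submission
  imports Defs
begin

text \<open>Order the declarations so that \<open>d1 \<le> d2\<close>. Equal positive declarations are no equilibrium
  (undercutting slightly drops the probability from 1/2 to 1/L), and equal zero declarations
  force \<open>t1 = t2 = 0\<close>. If \<open>d2 < c d1\<close>, the larger machine prefers to declare a huge value, which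
  costs it only \<open>d1/L\<close>. In the remaining region \<open>c d1 \<le> d2\<close> the smaller machine declares
  truthfully, because its cost \<open>(1 - s/(L d2)) s\<close> is increasing in its declaration \<open>s\<close>, and the
  larger machine has \<open>d1 \<le> t2 \<le> d2\<close>. The makespan is then
  \<open>(1 - t1/(L d2)) t1 + t1/L \<le> (1 + 1/L) t1\<close>.\<close>

definition best_response :: "real \<Rightarrow> real \<Rightarrow> real \<Rightarrow> real \<Rightarrow> real \<Rightarrow> bool" where
  "best_response L c t x y \<longleftrightarrow> (\<forall>z\<ge>0. cost L c t x y \<le> cost L c t z y)"

lemma pure_NE_iff_best_responses:
  "pure_NE L c t1 t2 d1 d2 \<longleftrightarrow>
     d1 \<ge> 0 \<and> d2 \<ge> 0 \<and> best_response L c t1 d1 d2 \<and> best_response L c t2 d2 d1"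
  unfolding pure_NE_def best_response_def by blast

lemma pure_NE_swap: "pure_NE L c t1 t2 d1 d2 \<Longrightarrow> pure_NE L c t2 t1 d2 d1"
  unfolding pure_NE_iff_best_responses by blast

lemma makespan_swap: "makespan L c t2 t1 d2 d1 = makespan L c t1 t2 d1 d2"
  unfolding makespan_def by simp

lemma best_responseD: "best_response L c t x y \<Longrightarrow> z \<ge> 0 \<Longrightarrow> cost L c t x y \<le> cost L c t z y"
  unfolding best_response_def by blast

lemma alloc_equal: "alloc L c x x = 1/2"
  unfolding alloc_def by simp

lemma alloc_lower_near: "x < y \<Longrightarrow> y < c * x \<Longrightarrow> alloc L c x y = 1/L"
  unfolding alloc_def by simp

lemma alloc_lower_far: "x < y \<Longrightarrow> c * x \<le> y \<Longrightarrow> alloc L c x y = 1 - x / (L * y)"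
  unfolding alloc_def by simp

lemma alloc_upper_near: "y < x \<Longrightarrow> x < c * y \<Longrightarrow> alloc L c x y = 1 - 1/L"
  unfolding alloc_def by simp

lemma alloc_upper_far: "y < x \<Longrightarrow> c * y \<le> x \<Longrightarrow> alloc L c x y = y / (L * x)"
  unfolding alloc_def by simp

lemma cost_upper_far:
  assumes "y < x" "c * y \<le> x" "t \<le> x" "0 \<le> y"
  shows "cost L c t x y = y / L"
  using assms unfolding cost_def alloc_upper_far[OF assms(1,2)] by simp

lemma lower_far_cost_strict_mono:
  fixes L y s s' :: real
  assumes "L > 0" "y > 0" "0 \<le> s" "s < s'" "s + s' < L * y"
  shows "(1 - s / (L * y)) * s < (1 - s' / (L * y)) * s'"
proof -
  have "L * y > 0"
    using assms by simp
  have "s * (L * y) - s * s < s' * (L * y) - s' * s'"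
    using mult_strict_left_mono[of "s + s'" "L * y" "s' - s"] assms
    by (simp add: algebra_simps)
  then have "(s * (L * y) - s * s) / (L * y) < (s' * (L * y) - s' * s') / (L * y)"
    using \<open>L * y > 0\<close> by (rule divide_strict_right_mono)
  moreover have "(1 - r / (L * y)) * r = (r * (L * y) - r * r) / (L * y)" for r
    using assms by (simp add: field_simps)
  ultimately show ?thesis
    by simp
qed

lemma best_response_equal_imp_zero:
  assumes L: "L > 2" and c: "c > 1" and d: "d \<ge> 0" and br: "best_response L c t d d"
  shows "d = 0"
proof (rule ccontr)
  assume "d \<noteq> 0"
  with d have "d > 0" by simp
  define x where "x = (d + d / c) / 2"
  have x: "0 \<le> x" "x < d" "d < c * x"
    using \<open>d > 0\<close> c unfolding x_def by (auto simp: field_simps)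
  have "cost L c t x d = (1/L) * max x t"
    unfolding cost_def alloc_lower_near[OF x(2,3)] ..
  also have "\<dots> \<le> (1/L) * max d t"
    using x L by (intro mult_left_mono) auto
  also have "\<dots> < (1/2) * max d t"
    using L \<open>d > 0\<close> by (intro mult_strict_right_mono) (auto simp: field_simps)
  also have "\<dots> = cost L c t d d"
    unfolding cost_def alloc_equal ..
  finally show False
    using best_responseD[OF br x(1)] by simp
qed

lemma best_response_zero_imp_zero:
  assumes c: "c > 1" and t: "t \<ge> 0" and br: "best_response L c t 0 0"
  shows "t = 0"
proof -
  have "cost L c t 1 0 = 0"
    using c unfolding cost_def alloc_def by simp
  moreover have "cost L c t 0 0 = t / 2"
    using t unfolding cost_def alloc_equal by simp
  ultimately show ?thesis
    using best_responseD[OF br, of 1] t by simp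
qed

lemma not_best_response_upper_near:
  assumes L: "L > 2" and "0 \<le> y" "y < x" "x < c * y" "t \<ge> 0"
  shows "\<not> best_response L c t x y"
proof
  assume br: "best_response L c t x y"
  define z where "z = c * y + t + x"
  have z: "0 \<le> z" "y < z" "c * y \<le> z" "t \<le> z"
    using assms unfolding z_def by auto
  have "cost L c t z y = y / L"
    using cost_upper_far[OF z(2-4) \<open>0 \<le> y\<close>] .
  also have "\<dots> \<le> (1/L) * x"
    using assms by (simp add: divide_right_mono)
  also have "\<dots> < (1 - 1/L) * x"
    using assms by (intro mult_strict_right_mono) (auto simp: field_simps)
  also have "\<dots> \<le> (1 - 1/L) * max x t"
    using L by (intro mult_left_mono) (auto simp: field_simps)
  also have "\<dots> = cost L c t x y"
    unfolding cost_def alloc_upper_near[OF \<open>y < x\<close> \<open>x < c * y\<close>] ..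
  finally show False
    using best_responseD[OF br z(1)] by simp
qed

text \<open>In the far region the smaller machine pays at least \<open>(1 - 1/L) t > t/L\<close>, whereas declaring
  \<open>t\<close> (if \<open>t < y\<close>) or \<open>c t\<close> (if \<open>y \<le> t\<close>) would cost at most \<open>t/L\<close> unless \<open>c t \<le> y\<close>.\<close>

lemma best_response_lower_far_bound:
  assumes L: "L > 2" and c: "c > 1" and "0 \<le> x" "x < y" "c * x \<le> y" "t \<ge> 0"
    and br: "best_response L c t x y"
  shows "c * t \<le> y"
proof (rule ccontr)
  assume "\<not> c * t \<le> y"
  then have yt: "y < c * t" by simp
  have "t > 0"
    using yt assms by (cases "t = 0") auto
  have "x / (L * y) \<le> y / (L * y)"
    using assms by (intro divide_right_mono) auto
  then have "x / (L * y) \<le> 1 / L"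
    using assms by simp
  moreover have "1 / L \<le> 1"
    using L by simp
  ultimately have "1 - 1/L \<le> 1 - x / (L * y)" "0 \<le> 1 - x / (L * y)"
    by linarith+
  have "(1/L) * t < (1 - 1/L) * t"
    using L \<open>t > 0\<close> by (intro mult_strict_right_mono) (auto simp: field_simps)
  also have "\<dots> \<le> (1 - x / (L * y)) * max x t"
    using \<open>1 - 1/L \<le> 1 - x / (L * y)\<close> \<open>0 \<le> 1 - x / (L * y)\<close> \<open>t \<ge> 0\<close>
    by (intro mult_mono) auto
  also have "\<dots> = cost L c t x y"
    unfolding cost_def alloc_lower_far[OF \<open>x < y\<close> \<open>c * x \<le> y\<close>] ..
  finally have current: "(1/L) * t < cost L c t x y" .
  obtain z where "z \<ge> 0" "cost L c t z y \<le> (1/L) * t"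
  proof (cases "t < y")
    case True
    show ?thesis
      using that[of t] \<open>t \<ge> 0\<close> unfolding cost_def alloc_lower_near[OF True yt] by simp
  next
    case False
    have "t < c * t"
      using c \<open>t > 0\<close> by simp
    moreover have "c * y \<le> c * t"
      using False c by simp
    ultimately have "cost L c t (c * t) y = y / L"
      using False yt assms by (intro cost_upper_far) auto
    then show ?thesis
      using that[of "c * t"] False c \<open>t > 0\<close> L yt by (simp add: divide_right_mono)
  qed
  then show False
    using best_responseD[OF br] current by fastforce
qed

lemma best_response_lower_far_truthful:
  assumes L: "L > 2" and c: "c > 1" and "0 \<le> x" "x < y" "c * x \<le> y" "t \<ge> 0"
    and br: "best_response L c t x y"
  shows "x = t"
proof (rule ccontr)
  assume "x \<noteq> t"
  have ct: "c * t \<le> y"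
    using best_response_lower_far_bound[OF assms] .
  have "t < y"
    using ct c assms by (cases "t = 0") (auto intro: less_le_trans[of t "c * t"])
  have Ly: "L > 0" "y > 0"
    using assms by auto
  have truthful: "cost L c t t y = (1 - t / (L * y)) * t"
    unfolding cost_def alloc_lower_far[OF \<open>t < y\<close> ct] by simp
  have "cost L c t t y < cost L c t x y"
  proof (cases "x < t")
    case True
    have "t / (L * y) * t > x / (L * y) * t"
      using True Ly \<open>0 \<le> x\<close> by (intro mult_strict_right_mono divide_strict_right_mono) auto
    then show ?thesis
      using True truthful unfolding cost_def alloc_lower_far[OF \<open>x < y\<close> \<open>c * x \<le> y\<close>]
      by (simp add: algebra_simps)
  next
    case False
    with \<open>x \<noteq> t\<close> have "t < x" by simp
    moreover have "2 * y < L * y"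
      using L Ly by simp
    then have "t + x < L * y"
      using \<open>t < x\<close> \<open>x < y\<close> by linarith
    moreover have "cost L c t x y = (1 - x / (L * y)) * x"
      using \<open>t < x\<close> unfolding cost_def alloc_lower_far[OF \<open>x < y\<close> \<open>c * x \<le> y\<close>] by simp
    ultimately show ?thesis
      using lower_far_cost_strict_mono[OF Ly \<open>t \<ge> 0\<close>] truthful by simp
  qed
  then show False
    using best_responseD[OF br \<open>t \<ge> 0\<close>] by simp
qed

text \<open>The larger machine pays at least \<open>x/L\<close>. Declaring a value just below \<open>x\<close> and at least
  \<open>x/c\<close> would beat that if \<open>t < x\<close>; declaring \<open>t\<close> costs exactly \<open>x/L\<close> and would beat it if
  \<open>y < t\<close>.\<close>

lemma best_response_upper_far_bounds:
  assumes L: "L > 2" and c: "c > 1" and "0 < x" "x < y" "c * x \<le> y" "t \<ge> 0"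
    and br: "best_response L c t y x"
  shows "x \<le> t" "t \<le> y"
proof -
  have Ly: "L > 0" "y > 0"
    using assms by auto
  have current: "cost L c t y x = x / (L * y) * max y t"
    unfolding cost_def alloc_upper_far[OF \<open>x < y\<close> \<open>c * x \<le> y\<close>] ..
  have "x / L \<le> cost L c t y x"
    unfolding current using Ly \<open>0 < x\<close>
    by (simp add: field_simps mult_left_mono)
  show "x \<le> t"
  proof (rule ccontr)
    assume "\<not> x \<le> t"
    define z where "z = (max t (x / c) + x) / 2"
    have "x / c < x"
      using c \<open>0 < x\<close> by (simp add: field_simps)
    moreover have "t < x"
      using \<open>\<not> x \<le> t\<close> by simp
    ultimately have "max t (x / c) < z" "z < x"
      unfolding z_def by auto
    then have z: "0 \<le> z" "t \<le> z" "z < x" "x < c * z"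
      using \<open>t \<ge> 0\<close> c by (auto simp: field_simps)
    have "cost L c t z x = z / L"
      using z unfolding cost_def alloc_lower_near[OF z(3,4)] by simp
    also have "\<dots> < x / L"
      using z Ly by (simp add: divide_strict_right_mono)
    finally show False
      using best_responseD[OF br z(1)] \<open>x / L \<le> cost L c t y x\<close> by simp
  qed
  show "t \<le> y"
  proof (rule ccontr)
    assume "\<not> t \<le> y"
    then have "cost L c t t x = x / L"
      using assms by (intro cost_upper_far) auto
    also have "\<dots> < cost L c t y x"
      unfolding current using \<open>\<not> t \<le> y\<close> Ly \<open>0 < x\<close> by (simp add: field_simps)
    finally show False
      using best_responseD[OF br \<open>t \<ge> 0\<close>] by simp
  qed
qed

lemma makespan_le_ordered:
  fixes L c t1 t2 d1 d2 :: real
  assumes L: "L > 2" and c: "c > 1" and t1: "t1 \<ge> 0" and t2: "t2 \<ge> 0"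
    and NE: "pure_NE L c t1 t2 d1 d2" and "d1 \<le> d2"
  shows "makespan L c t1 t2 d1 d2 \<le> (1 + 1 / L) * min t1 t2"
proof -
  from NE have d1: "d1 \<ge> 0"
    and br1: "best_response L c t1 d1 d2" and br2: "best_response L c t2 d2 d1"
    unfolding pure_NE_iff_best_responses by auto
  consider "d1 = d2" | "d1 < d2" "d2 < c * d1" | "d1 < d2" "c * d1 \<le> d2"
    using \<open>d1 \<le> d2\<close> by linarith
  then show ?thesis
  proof cases
    case 1
    then have "d1 = 0"
      using best_response_equal_imp_zero L c d1 br1 by blast
    with 1 have "t1 = 0" "t2 = 0"
      using best_response_zero_imp_zero c t1 t2 br1 br2 by auto
    with 1 \<open>d1 = 0\<close> show ?thesis
      unfolding makespan_def by simp
  next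
    case 2
    then show ?thesis
      using not_best_response_upper_near L d1 t2 br2 by blast
  next
    case 3
    have "d1 = t1"
      using best_response_lower_far_truthful L c d1 3 t1 br1 by blast
    show ?thesis
    proof (cases "d1 = 0")
      case True
      with 3 show ?thesis
        using \<open>d1 = t1\<close> t2 unfolding makespan_def alloc_lower_far[OF 3] alloc_upper_far[OF 3]
        by simp
    next
      case False
      then have "t1 \<le> t2" "t2 \<le> d2"
        using best_response_upper_far_bounds[OF L c _ 3 t2 br2] d1 \<open>d1 = t1\<close> by auto
      have "makespan L c t1 t2 d1 d2 = (1 - t1 / (L * d2)) * t1 + t1 / L"
        using \<open>d1 = t1\<close> \<open>t2 \<le> d2\<close> 3 L d1
        unfolding makespan_def alloc_lower_far[OF 3] alloc_upper_far[OF 3] by simp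
      also have "\<dots> \<le> (1 + 1 / L) * t1"
        using L t1 3 d1 by (simp add: algebra_simps)
      also have "\<dots> = (1 + 1 / L) * min t1 t2"
        using \<open>t1 \<le> t2\<close> by simp
      finally show ?thesis .
    qed
  qed
qed

theorem theorem1:
  fixes L c t1 t2 d1 d2 :: real
  assumes "L > 2" and "c > 1"
    and "t1 \<ge> 0" and "t2 \<ge> 0"
    and "pure_NE L c t1 t2 d1 d2"
  shows "makespan L c t1 t2 d1 d2 \<le> (1 + 1 / L) * min t1 t2"
proof (cases "d1 \<le> d2")
  case True
  with assms show ?thesis
    by (intro makespan_le_ordered) auto
next
  case False
  then have "makespan L c t2 t1 d2 d1 \<le> (1 + 1 / L) * min t2 t1"
    using assms pure_NE_swap by (intro makespan_le_ordered) auto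
  then show ?thesis
    by (simp add: makespan_swap min.commute)
qed

end
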